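(* Let $V$ be a set of $n=2^N$ nodes, let $\mathcal{N}_t$ be an $N$-dimensional hypercube on $V$ at time $t$, and let $\sigma_1,\dots,\sigma_{t-1}$ be the communication requests that occurred before time $t$. Then for every node $u\in V$ there exists a node $v\in V$, $v\neq u$, such that $$d_{Tree}(\mathcal{N}_t,(u,v))\ \ge\ \left\lceil \log_2 T_t(u,v)\right\rceil ,$$ where $T_t(u,v)$ is the working set number of the pair $(u,v)$ at time $t$ (i.e. computed as if $(u,v)$ were the request at time $t$).
   Context: Hypercube networks: $V$ is a set of $n=2^N$ nodes. An $N$-dimensional hypercube on $V$ is a bijection $\mathrm{Coord}:V\to\{0,1\}^N$; two nodes are linked iff their coordinates differ in exactly one bit. $\mathrm{Coord}_i(x)$ is the $i$-th bit. For $0\le d\le N$, the level-$d$ subtree $s^x_d$ of a node $x$ is the set of nodes whose coordinates agree with $\mathrm{Coord}(x)$ in the first $d$ bits (so $s^x_0=V$, $|s^x_d|=2^{N-d}$, $s^x_N=\{x\}$). The level-$d$ complementary subtree $\sim s^x_d$ ($1\le d\le N$) is $s^x_{d-1}\setminus s^x_d$. For nodes $u,v$, $L_{lca}(u,v)$ is the largest $\ell$ such that $u$ and $v$ lie in the same level-$\ell$ subtree (the length of the longest common prefix of their coordinates), and the tree distance is $d_{Tree}(\mathcal{N}_t,(u,v))=N-L_{lca}(u,v)$. Communications: a request sequence $\sigma=(\sigma_1,\dots,\sigma_m)$ with $\sigma_i=(u_i,v_i)\in V\times V$, $u_i\ne v_i$, request $\sigma_i$ occurring at time $i$; the network at time $i$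 is $\mathcal{N}_i$. For times $t'\le t$, the communication graph on $[t',t)$ is the simple undirected graph on vertex set $V$ with an edge $\{a,b\}$ for each request $(a,b)$ made at a time in $[t',t)$; $\mathcal{G}_x(t',t)$ denotes the connected component containing $x$ in it. Working set number $T_t(u,v)$ of a pair $(u,v)$ at time $t$: (i) if $u$ and $v$ communicated before time $t$, let $t'$ be the last such time; then $T_t(u,v)$ is the number of nodes of $\mathcal{G}_u(t',t)$; (ii) otherwise, let $V_u,V_v$ be the vertex sets of $\mathcal{G}_u(0,t)$ and $\mathcal{G}_v(0,t)$; if $v\in V_u$, then $T_t(u,v)=|V_u|$; if $v\notin V_u$, then $T_t(u,v)=\max(2^{d},|V_u|+|V_v|)$ where $d=d_{Tree}(\mathcal{N}_t,(u,v))$. *)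

theory Defs
  imports Complex_Main
begin

text \<open>An N-dimensional hypercube on V: a bijection Coord from V onto the bit strings
  of length N (bit strings as bool lists; bit i is Coord x ! i, the "first d bits"
  are take d).\<close>
definition hypercube :: "'a set \<Rightarrow> nat \<Rightarrow> ('a \<Rightarrow> bool list) \<Rightarrow> bool" where
  "hypercube V N Coord \<longleftrightarrow> bij_betw Coord V {xs. length xs = N}"

definition linked :: "('a \<Rightarrow> bool list) \<Rightarrow> 'a \<Rightarrow> 'a \<Rightarrow> bool" where
  "linked Coord a b \<longleftrightarrow> card {i. i < length (Coord a) \<and> Coord a ! i \<noteq> Coord b ! i} = 1"

definition subtree :: "'a set \<Rightarrow> ('a \<Rightarrow> bool list) \<Rightarrow> 'a \<Rightarrow> nat \<Rightarrow> 'a set" where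
  "subtree V Coord x d = {y \<in> V. take d (Coord y) = take d (Coord x)}"

definition L_lca :: "'a set \<Rightarrow> nat \<Rightarrow> ('a \<Rightarrow> bool list) \<Rightarrow> 'a \<Rightarrow> 'a \<Rightarrow> nat" where
  "L_lca V N Coord u v = (GREATEST l. l \<le> N \<and> v \<in> subtree V Coord u l)"

definition d_Tree :: "'a set \<Rightarrow> nat \<Rightarrow> ('a \<Rightarrow> bool list) \<Rightarrow> 'a \<Rightarrow> 'a \<Rightarrow> nat" where
  "d_Tree V N Coord u v = N - L_lca V N Coord u v"

text \<open>Requests: sigma i is the request at time i (i >= 1). Communication graph on
  [t', t): undirected edges from requests made at times i with t' <= i < t.\<close>
definition comm_edge :: "(nat \<Rightarrow> 'a \<times> 'a) \<Rightarrow> nat \<Rightarrow> nat \<Rightarrow> ('a \<times> 'a) set" where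
  "comm_edge \<sigma> t' t = {(a, b). \<exists>i. 1 \<le> i \<and> t' \<le> i \<and> i < t \<and> (\<sigma> i = (a, b) \<or> \<sigma> i = (b, a))}"

definition comp :: "(nat \<Rightarrow> 'a \<times> 'a) \<Rightarrow> nat \<Rightarrow> nat \<Rightarrow> 'a \<Rightarrow> 'a set" where
  "comp \<sigma> t' t x = {y. (x, y) \<in> (comm_edge \<sigma> t' t)\<^sup>*}"

definition communicated :: "(nat \<Rightarrow> 'a \<times> 'a) \<Rightarrow> nat \<Rightarrow> 'a \<Rightarrow> 'a \<Rightarrow> bool" where
  "communicated \<sigma> t u v \<longleftrightarrow> (\<exists>i. 1 \<le> i \<and> i < t \<and> (\<sigma> i = (u, v) \<or> \<sigma> i = (v, u)))"

definition last_comm :: "(nat \<Rightarrow> 'a \<times> 'a) \<Rightarrow> nat \<Rightarrow> 'a \<Rightarrow> 'a \<Rightarrow> nat" where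
  "last_comm \<sigma> t u v = (GREATEST i. 1 \<le> i \<and> i < t \<and> (\<sigma> i = (u, v) \<or> \<sigma> i = (v, u)))"

definition working_set :: "'a set \<Rightarrow> nat \<Rightarrow> ('a \<Rightarrow> bool list) \<Rightarrow> (nat \<Rightarrow> 'a \<times> 'a) \<Rightarrow> nat \<Rightarrow> 'a \<Rightarrow> 'a \<Rightarrow> nat" where
  "working_set V N Coord \<sigma> t u v =
     (if communicated \<sigma> t u v then card (comp \<sigma> (last_comm \<sigma> t u v) t u)
      else if v \<in> comp \<sigma> 0 t u then card (comp \<sigma> 0 t u)
      else max (2 ^ d_Tree V N Coord u v) (card (comp \<sigma> 0 t u) + card (comp \<sigma> 0 t v)))"

end

theory Submission
  imports Defs
begin

text \<open>Take for v a node whose first coordinate bit differs from that of u. Then u and v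
  share only the root subtree, so their tree distance is the maximal value N. On the
  other hand every working set number is at most the number 2^N of nodes: components of
  the communication graph lie inside V, two different components are disjoint, and
  2^(d_Tree) \<le> 2^N. Hence \<lceil>log 2 T\<rceil> \<le> N.\<close>

lemma comp_subset:
  assumes "\<And>i. 1 \<le> i \<Longrightarrow> i < t \<Longrightarrow> fst (\<sigma> i) \<in> V \<and> snd (\<sigma> i) \<in> V"
    and "u \<in> V"
  shows "comp \<sigma> t' t u \<subseteq> V"
proof
  fix y assume "y \<in> comp \<sigma> t' t u"
  hence "(u, y) \<in> (comm_edge \<sigma> t' t)\<^sup>*" by (simp add: comp_def)
  thus "y \<in> V"
  proof (induction rule: rtrancl_induct)
    case base
    show ?case using assms(2) .
  next
    case (step y z)
    then obtain i where "1 \<le> i" "i < t" "\<sigma> i = (y, z) \<or> \<sigma> i = (z, y)"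
      by (auto simp: comm_edge_def)
    then show ?case using assms(1)[of i] by auto
  qed
qed

lemma sym_comm_edge: "sym (comm_edge \<sigma> t' t)"
  by (auto simp: sym_def comm_edge_def)

lemma comp_disjoint:
  assumes "v \<notin> comp \<sigma> t' t u"
  shows "comp \<sigma> t' t u \<inter> comp \<sigma> t' t v = {}"
proof (rule ccontr)
  let ?R = "(comm_edge \<sigma> t' t)\<^sup>*"
  assume "comp \<sigma> t' t u \<inter> comp \<sigma> t' t v \<noteq> {}"
  then obtain x where ux: "(u, x) \<in> ?R" and vx: "(v, x) \<in> ?R"
    by (auto simp: comp_def)
  have "(x, v) \<in> ?R"
    using vx sym_rtrancl[OF sym_comm_edge] by (meson symD)
  with ux have "(u, v) \<in> ?R" by (meson rtrancl_trans)
  thus False using assms by (simp add: comp_def)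
qed

lemma d_Tree_le: "d_Tree V N Coord u v \<le> N"
  by (simp add: d_Tree_def)

lemma working_set_le_card:
  assumes "finite V"
    and "\<And>i. 1 \<le> i \<Longrightarrow> i < t \<Longrightarrow> fst (\<sigma> i) \<in> V \<and> snd (\<sigma> i) \<in> V"
    and "u \<in> V" and "v \<in> V"
  shows "working_set V N Coord \<sigma> t u v \<le> max (2 ^ N) (card V)"
proof -
  have comp_le: "card (comp \<sigma> t' t x) \<le> card V" if "x \<in> V" for t' x
    using card_mono[OF assms(1) comp_subset[of t \<sigma> V, OF assms(2) that]] .
  have sum_le: "card (comp \<sigma> 0 t u) + card (comp \<sigma> 0 t v) \<le> card V"
    if "v \<notin> comp \<sigma> 0 t u"
  proof -
    have su: "comp \<sigma> 0 t u \<subseteq> V"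
      using comp_subset[of t \<sigma> V, OF assms(2) assms(3)] .
    have sv: "comp \<sigma> 0 t v \<subseteq> V"
      using comp_subset[of t \<sigma> V, OF assms(2) assms(4)] .
    have "card (comp \<sigma> 0 t u) + card (comp \<sigma> 0 t v) = card (comp \<sigma> 0 t u \<union> comp \<sigma> 0 t v)"
      using card_Un_disjoint[OF finite_subset[OF su assms(1)] finite_subset[OF sv assms(1)]
          comp_disjoint[OF that]] by simp
    also have "\<dots> \<le> card V"
      using su sv assms(1) by (intro card_mono) auto
    finally show ?thesis .
  qed
  have pow_le: "(2::nat) ^ d_Tree V N Coord u v \<le> 2 ^ N"
    using d_Tree_le by (intro power_increasing) auto
  show ?thesis
  proof (cases "communicated \<sigma> t u v \<or> v \<in> comp \<sigma> 0 t u")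
    case True
    then show ?thesis
      unfolding working_set_def using comp_le[OF assms(3)] by (auto intro: max.coboundedI2)
  next
    case False
    then show ?thesis
      unfolding working_set_def using max.mono[OF pow_le sum_le] by auto
  qed
qed

lemma L_lca_eq_0_if_first_bit_differs:
  assumes "Coord v ! 0 \<noteq> Coord u ! 0" and "v \<in> V"
  shows "L_lca V N Coord u v = 0"
  unfolding L_lca_def
proof (rule Greatest_equality)
  show "0 \<le> N \<and> v \<in> subtree V Coord u 0"
    using assms(2) by (simp add: subtree_def)
next
  fix l assume "l \<le> N \<and> v \<in> subtree V Coord u l"
  hence "take l (Coord v) = take l (Coord u)" by (simp add: subtree_def)
  hence "l > 0 \<Longrightarrow> Coord v ! 0 = Coord u ! 0"
    by (metis nth_take)
  thus "l \<le> 0"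
    using assms(1) by linarith
qed

lemma hypercube_flip_first_bit:
  assumes "hypercube V N Coord" and "N \<ge> 1" and "u \<in> V"
  obtains v where "v \<in> V" and "Coord v ! 0 \<noteq> Coord u ! 0"
proof -
  have bij: "bij_betw Coord V {xs. length xs = N}"
    using assms(1) by (simp add: hypercube_def)
  hence "length (Coord u) = N"
    using assms(3) by (auto dest: bij_betw_apply)
  hence "(\<not> Coord u ! 0) # tl (Coord u) \<in> Coord ` V"
    using bij assms(2) by (simp add: bij_betw_def)
  then obtain v where "v \<in> V" "Coord v = (\<not> Coord u ! 0) # tl (Coord u)"
    by (metis imageE)
  thus ?thesis using that by simp
qed

lemma ceiling_log2_le:
  assumes "m \<le> 2 ^ N"
  shows "\<lceil>log 2 (real m)\<rceil> \<le> int N"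
proof -
  have "log 2 (real m) \<le> real N"
  proof (cases "m = 0")
    case True
    then show ?thesis by (simp add: log_def)
  next
    case False
    then show ?thesis using assms log_of_power_le[of m 2 N] by simp
  qed
  thus ?thesis by (simp add: ceiling_le_iff)
qed

theorem mainTheorem1:
  fixes V :: "'a set" and N :: nat and Coord :: "'a \<Rightarrow> bool list"
    and \<sigma> :: "nat \<Rightarrow> 'a \<times> 'a" and t :: nat and u :: 'a
  assumes "finite V" and "card V = 2 ^ N" and "N \<ge> 1"
    and "hypercube V N Coord"
    and "\<And>i. 1 \<le> i \<Longrightarrow> i < t \<Longrightarrow> fst (\<sigma> i) \<in> V \<and> snd (\<sigma> i) \<in> V \<and> fst (\<sigma> i) \<noteq> snd (\<sigma> i)"
    and "u \<in> V"
  shows "\<exists>v\<in>V. v \<noteq> u \<and>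
           of_int \<lceil>log 2 (real (working_set V N Coord \<sigma> t u v))\<rceil> \<le> real (d_Tree V N Coord u v)"
proof -
  obtain v where v: "v \<in> V" and differs: "Coord v ! 0 \<noteq> Coord u ! 0"
    using hypercube_flip_first_bit[OF assms(4,3,6)] .
  have "d_Tree V N Coord u v = N"
    using L_lca_eq_0_if_first_bit_differs[OF differs v] by (simp add: d_Tree_def)
  moreover have "working_set V N Coord \<sigma> t u v \<le> 2 ^ N"
    using working_set_le_card[of V t \<sigma> u v N Coord] assms v by simp
  ultimately have "\<lceil>log 2 (real (working_set V N Coord \<sigma> t u v))\<rceil> \<le> int (d_Tree V N Coord u v)"
    using ceiling_log2_le by simp
  moreover have "v \<noteq> u" using differs by blast
  ultimately show ?thesis using v by auto
qed

end
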